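(* Let $K\ge2$, $t\in(0,1)$, $\xi(s)=(1+s)^K-1$, and let either $\xi_0(s)=t\xi(s)$ or $\xi_0(s)=\xi(ts)$. Then $\xi_0''(s)<\xi''(|s|)$ for all $s\in[-1,1]\setminus\{0\}$, and the functions $$\zeta_+(s)=\frac{\xi''(s)}{\xi''(s)+\xi_0''(s)},\qquad \zeta_-(s)=\frac{\xi''(s)}{\xi''(s)+\xi_0''(-s)}$$ are nondecreasing on $(0,1]$. *)

theory Defs
  imports "HOL-Analysis.Analysis"
begin

definition xi :: "nat \<Rightarrow> real \<Rightarrow> real" where
  "xi K s = (1 + s) ^ K - 1"

end

theory Submission
  imports Defs
begin

text \<open>With \<open>c = K(K-1)\<close> and \<open>m = K-2\<close> we have \<open>\<xi>''(s) = c(1+s)^m\<close>, and in both cases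
  \<open>\<xi>\<^sub>0''(s) = l \<xi>''(a s)\<close> with \<open>0 \<le> l < 1\<close> and \<open>0 < a \<le> 1\<close> (namely \<open>l = t, a = 1\<close> or
  \<open>l = t\<^sup>2, a = t\<close>). The strict inequality is then monotonicity of \<open>(1+s)^m\<close>. For the
  ratios, \<open>\<zeta>(s) = 1 / (1 + l ((1+bs)/(1+s))^m)\<close> with \<open>b = \<plusminus>a\<close>, and \<open>(1+bs)/(1+s)\<close> is
  nonincreasing on \<open>[0,1]\<close> because \<open>b \<le> 1\<close>.\<close>

lemma deriv_xi: "deriv (xi K) = (\<lambda>s. real K * (1 + s) ^ (K - 1))"
proof
  fix s :: real
  have "(xi K has_field_derivative real K * (1 + s) ^ (K - 1)) (at s)"
    unfolding xi_def by (rule derivative_eq_intros refl)+ simp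
  then show "deriv (xi K) s = real K * (1 + s) ^ (K - 1)"
    by (rule DERIV_imp_deriv)
qed

lemma deriv2_xi: "deriv (deriv (xi K)) = (\<lambda>s. real K * real (K - 1) * (1 + s) ^ (K - 2))"
proof
  fix s :: real
  have "((\<lambda>s. real K * (1 + s) ^ (K - 1)) has_field_derivative
          real K * real (K - 1) * (1 + s) ^ (K - 2)) (at s)"
    by (rule derivative_eq_intros refl)+ (simp add: of_nat_diff numeral_2_eq_2)
  then show "deriv (deriv (xi K)) s = real K * real (K - 1) * (1 + s) ^ (K - 2)"
    unfolding deriv_xi by (rule DERIV_imp_deriv)
qed

lemma xi_field_differentiable: "xi K field_differentiable at s"
  unfolding xi_def by (intro derivative_intros)

lemma deriv_xi_field_differentiable: "deriv (xi K) field_differentiable at s"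
  unfolding deriv_xi by (intro derivative_intros)

lemma deriv2_xi_cmult:
  "deriv (deriv (\<lambda>s. c * xi K s)) = (\<lambda>s. c * deriv (deriv (xi K)) s)"
proof -
  have "deriv (\<lambda>s. c * xi K s) = (\<lambda>s. c * deriv (xi K) s)"
    using xi_field_differentiable by (intro ext deriv_cmult)
  then show ?thesis
    using deriv_xi_field_differentiable by (auto intro: deriv_cmult)
qed

lemma deriv2_xi_compose_linear:
  "deriv (deriv (\<lambda>s. xi K (c * s))) = (\<lambda>s. c\<^sup>2 * deriv (deriv (xi K)) (c * s))"
proof -
  have "deriv (\<lambda>s. xi K (c * s)) = (\<lambda>s. c * deriv (xi K) (c * s))"
    using xi_field_differentiable by (intro ext deriv_compose_linear)
  moreover have "(\<lambda>s. deriv (xi K) (c * s)) field_differentiable at s" for s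
    unfolding deriv_xi by (intro derivative_intros)
  ultimately show ?thesis
    using deriv_xi_field_differentiable
    by (auto simp: deriv_cmult deriv_compose_linear power2_eq_square)
qed

lemma divide_add_le_divide_add:
  fixes p q p' q' :: real
  assumes "0 < p" "0 < p'" "0 \<le> q" "0 \<le> q'" "p * q' \<le> p' * q"
  shows "p / (p + q) \<le> p' / (p' + q')"
proof -
  have "p * (p' + q') \<le> p' * (p + q)"
    using assms(5) by (simp add: algebra_simps)
  then show ?thesis
    using assms(1-4) by (simp add: field_simps)
qed

lemma mono_on_power_ratio:
  fixes a c l :: real
  assumes "0 < c" "\<bar>a\<bar> \<le> 1" "0 \<le> l"
  shows "mono_on {0..1} (\<lambda>s. c * (1 + s) ^ m / (c * (1 + s) ^ m + l * (c * (1 + a * s) ^ m)))"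
proof (rule mono_onI)
  fix x y :: real
  assume x: "x \<in> {0..1}" and y: "y \<in> {0..1}" and "x \<le> y"
  have "\<bar>a * y\<bar> \<le> 1"
    using assms(2) y by (simp add: abs_mult mult_le_one)
  then have "0 \<le> (1 + x) * (1 + a * y)"
    using x by simp
  moreover have "(1 + x) * (1 + a * y) \<le> (1 + y) * (1 + a * x)"
  proof -
    have "0 \<le> (1 - a) * (y - x)"
      using assms(2) \<open>x \<le> y\<close> by simp
    then show ?thesis
      by (simp add: algebra_simps)
  qed
  ultimately have "((1 + x) * (1 + a * y)) ^ m \<le> ((1 + y) * (1 + a * x)) ^ m"
    by (intro power_mono)
  then have "c * (1 + x) ^ m * (l * (c * (1 + a * y) ^ m))
             \<le> c * (1 + y) ^ m * (l * (c * (1 + a * x) ^ m))"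
    using assms(1,3) by (simp add: power_mult_distrib mult_left_mono mult.left_commute mult.assoc)
  moreover have "\<bar>a * x\<bar> \<le> 1"
    using assms(2) x by (simp add: abs_mult mult_le_one)
  ultimately show "c * (1 + x) ^ m / (c * (1 + x) ^ m + l * (c * (1 + a * x) ^ m))
                   \<le> c * (1 + y) ^ m / (c * (1 + y) ^ m + l * (c * (1 + a * y) ^ m))"
    using assms(1,3) x y \<open>\<bar>a * y\<bar> \<le> 1\<close>
    by (intro divide_add_le_divide_add) auto
qed

lemma scaled_power_less:
  fixes a c l s :: real
  assumes "0 < c" "0 \<le> l" "l < 1" "\<bar>a\<bar> \<le> 1" "\<bar>s\<bar> \<le> 1"
  shows "l * (c * (1 + a * s) ^ m) < c * (1 + \<bar>s\<bar>) ^ m"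
proof -
  have "\<bar>a * s\<bar> \<le> \<bar>s\<bar>"
    using assms(4) by (simp add: abs_mult mult_left_le_one_le)
  then have "(1 + a * s) ^ m \<le> (1 + \<bar>s\<bar>) ^ m"
    using assms(5) by (intro power_mono) auto
  then have "l * (c * (1 + a * s) ^ m) \<le> l * (c * (1 + \<bar>s\<bar>) ^ m)"
    using assms(1,2) by (simp add: mult_left_mono)
  also have "\<dots> < c * (1 + \<bar>s\<bar>) ^ m"
    using assms(1,3) by simp
  finally show ?thesis .
qed

theorem lemma2:
  fixes K :: nat and t :: real and xi0 :: "real \<Rightarrow> real"
  assumes "K \<ge> 2" and "0 < t" and "t < 1"
    and "xi0 = (\<lambda>s. t * xi K s) \<or> xi0 = (\<lambda>s. xi K (t * s))"
  shows "(\<forall>s\<in>{-1..1} - {0}. deriv (deriv xi0) s < deriv (deriv (xi K)) \<bar>s\<bar>)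
    \<and> mono_on {0<..1} (\<lambda>s. deriv (deriv (xi K)) s /
                               (deriv (deriv (xi K)) s + deriv (deriv xi0) s))
    \<and> mono_on {0<..1} (\<lambda>s. deriv (deriv (xi K)) s /
                               (deriv (deriv (xi K)) s + deriv (deriv xi0) (- s)))"
proof -
  define c where "c = real K * real (K - 1)"
  define m where "m = K - 2"
  have "0 < c"
    using assms(1) by (simp add: c_def)
  have xi'': "deriv (deriv (xi K)) = (\<lambda>s. c * (1 + s) ^ m)"
    by (simp add: deriv2_xi c_def m_def)
  obtain l a where "0 \<le> l" "l < 1" "\<bar>a\<bar> \<le> 1"
    and xi0'': "deriv (deriv xi0) = (\<lambda>s. l * (c * (1 + a * s) ^ m))"
  proof (cases "xi0 = (\<lambda>s. t * xi K s)")
    case True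
    show thesis
      using assms(2,3) by (intro that[of t 1]) (simp_all add: True deriv2_xi_cmult xi'')
  next
    case False
    then have "xi0 = (\<lambda>s. xi K (t * s))"
      using assms(4) by simp
    moreover have "t\<^sup>2 < 1"
      using assms(2,3) by (simp add: power_less_one_iff)
    ultimately show thesis
      using assms(2,3) by (intro that[of "t\<^sup>2" t]) (simp_all add: deriv2_xi_compose_linear xi'')
  qed
  have "\<forall>s\<in>{-1..1} - {0}. deriv (deriv xi0) s < deriv (deriv (xi K)) \<bar>s\<bar>"
    unfolding xi'' xi0''
    using \<open>0 < c\<close> \<open>0 \<le> l\<close> \<open>l < 1\<close> \<open>\<bar>a\<bar> \<le> 1\<close>
    by (intro ballI scaled_power_less) auto
  moreover have ratio_mono:
    "mono_on {0<..1} (\<lambda>s. c * (1 + s) ^ m / (c * (1 + s) ^ m + l * (c * (1 + b * s) ^ m)))"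
    if "\<bar>b\<bar> \<le> 1" for b
    using mono_on_power_ratio[OF \<open>0 < c\<close> that \<open>0 \<le> l\<close>] by (rule mono_on_subset) auto
  ultimately show ?thesis
    unfolding xi'' xi0'' using ratio_mono[of a] ratio_mono[of "- a"] \<open>\<bar>a\<bar> \<le> 1\<close> by simp
qed

end
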